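(* Let $P=\{(u_1,v_1),\ldots,(u_n,v_n)\}\subseteq\{a,b\}^*\times\{a,b\}^*$ with $n\ge3$ have no solution as an instance of Restricted PCP, and let $W=W_0\cup\cdots\cup W_{15}$ be constructed from $P$ as in the context. Then for every cycle $Q$ of $W$, the componentwise product $Q$ in $F(\Gamma)\times F(\Gamma)$ is not equal to $(\varepsilon,\varepsilon)$.
   Context: For a set $H$, $F(H)$ denotes the free group on $H$; $\varepsilon$ is its identity (the empty word), and pairs of elements of free groups are multiplied componentwise. Restricted PCP: given $P=\{(u_1,v_1),\ldots,(u_n,v_n)\}\subseteq\{a,b\}^*\times\{a,b\}^*$ with $n\ge3$, a solution is a finite (possibly empty) sequence $l_1,\ldots,l_k$ with $2\le l_i\le n-1$ such that $u_1u_{l_1}\cdots u_{l_k}u_n=v_1v_{l_1}\cdots v_{l_k}v_n$. Construction of $W$. Let $\Gamma_i=\{a_i,b_i\}$ for $1\le i\le4$ and $\Gamma_B=\{x_1,\ldots,x_8\}$ be pairwise disjoint sets of letters, and $\Gamma=\Gamma_1\cup\Gamma_2\cup\Gamma_3\cup\Gamma_4\cup\Gamma_B$. Let $\delta_i:F(\{a,b\})\to F(\Gamma_i)$ be the homomorphism with $\delta_i(a)=a_i$, $\delta_i(b)=b_i$, and set $u_{ik}=\delta_i(u_k)$, $v_{ik}=\delta_i(v_k)$. For a positive integer $j$ let $\phi_i(j)=a_i^jb_i$ and $\psi_i(j)=(a_i^{-1})^jb_i^{-1}$. Put $x_0:=x_8$. For $p=1,2,3,4$ define $W_{4(p-1)}=\{(x_{2p-2}\,v_{p1}^{-1}u_{p1}\,x_{2p-1}^{-1},\;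 x_{2p-2}\,b_p\,x_{2p-1}^{-1})\}$, $W_{4(p-1)+1}=\{(x_{2p-1}\,u_{pj}\,x_{2p-1}^{-1},\; x_{2p-1}\,\phi_p(j)\,x_{2p-1}^{-1}) : 2\le j\le n-1\}$, $W_{4(p-1)+2}=\{(x_{2p-1}\,u_{pn}v_{pn}^{-1}\,x_{2p}^{-1},\; x_{2p-1}\,b_p^{-1}\,x_{2p}^{-1})\}$, $W_{4(p-1)+3}=\{(x_{2p}\,v_{pj}^{-1}\,x_{2p}^{-1},\; x_{2p}\,\psi_p(j)\,x_{2p}^{-1}) : 2\le j\le n-1\}$, and $W=W_0\cup W_1\cup\cdots\cup W_{15}$. A cycle of $W$ is a product $w_i\,w_{(i+1)\bmod 16}\cdots w_{(i+15)\bmod16}$ for some $0\le i\le15$, where $w_y\in W_y$ (a single pair) when $y$ is even and $w_y$ is a (possibly empty) finite product of pairs from $W_y$ when $y$ is odd. *)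

theory Defs
  imports Main
begin

text \<open>An element of the free group F(H) is represented by a reduced word over
H \<times> bool, where (h, True) is the letter h and (h, False) its inverse.\<close>

type_synonym 'a fword = "('a \<times> bool) list"

fun push :: "'a \<times> bool \<Rightarrow> 'a fword \<Rightarrow> 'a fword" where
  "push x [] = [x]"
| "push x (y # ys) = (if fst x = fst y \<and> snd x \<noteq> snd y then ys else x # y # ys)"

definition fnorm :: "'a fword \<Rightarrow> 'a fword" where
  "fnorm w = foldr push w []"

definition fmul :: "'a fword \<Rightarrow> 'a fword \<Rightarrow> 'a fword" where
  "fmul u w = fnorm (u @ w)"

definition finv :: "'a fword \<Rightarrow> 'a fword" where
  "finv w = rev (map (\<lambda>(h, s). (h, \<not> s)) w)"

definition fgen :: "'a \<Rightarrow> 'a fword" where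
  "fgen h = [(h, True)]"

definition fprod :: "'a fword list \<Rightarrow> 'a fword" where
  "fprod ws = foldr fmul ws []"

definition pmul :: "'a fword \<times> 'a fword \<Rightarrow> 'a fword \<times> 'a fword \<Rightarrow> 'a fword \<times> 'a fword" where
  "pmul p q = (fmul (fst p) (fst q), fmul (snd p) (snd q))"

definition pprod :: "('a fword \<times> 'a fword) list \<Rightarrow> 'a fword \<times> 'a fword" where
  "pprod ps = foldr pmul ps ([], [])"

datatype ab = a | b

text \<open>Letters of \<Gamma>: LA i = a_i, LB i = b_i (1 \<le> i \<le> 4), LX j = x_j (1 \<le> j \<le> 8).\<close>
datatype gam = LA nat | LB nat | LX nat

definition delta :: "nat \<Rightarrow> ab list \<Rightarrow> gam fword" where
  "delta i w = fprod (map (\<lambda>c. case c of a \<Rightarrow> fgen (LA i) | b \<Rightarrow> fgen (LB i)) w)"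

definition xg :: "nat \<Rightarrow> gam fword" where
  "xg j = fgen (LX (if j = 0 then 8 else j))"

definition phi :: "nat \<Rightarrow> nat \<Rightarrow> gam fword" where
  "phi i j = fprod (replicate j (fgen (LA i)) @ [fgen (LB i)])"

definition psi :: "nat \<Rightarrow> nat \<Rightarrow> gam fword" where
  "psi i j = fprod (replicate j (finv (fgen (LA i))) @ [finv (fgen (LB i))])"

definition rpcp_solution :: "nat \<Rightarrow> (nat \<Rightarrow> ab list) \<Rightarrow> (nat \<Rightarrow> ab list) \<Rightarrow> nat list \<Rightarrow> bool" where
  "rpcp_solution n u v ls \<longleftrightarrow>
     (\<forall>l \<in> set ls. 2 \<le> l \<and> l \<le> n - 1) \<and>
     u 1 @ concat (map u ls) @ u n = v 1 @ concat (map v ls) @ v n"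

text \<open>Wset n u v y is W_y for 0 \<le> y \<le> 15; write y = 4(p-1)+r with 1 \<le> p \<le> 4, 0 \<le> r \<le> 3.\<close>
definition Wset :: "nat \<Rightarrow> (nat \<Rightarrow> ab list) \<Rightarrow> (nat \<Rightarrow> ab list) \<Rightarrow> nat \<Rightarrow> (gam fword \<times> gam fword) set" where
  "Wset n u v y =
    (let p = y div 4 + 1; r = y mod 4;
         U = (\<lambda>k. delta p (u k)); V = (\<lambda>k. delta p (v k)) in
     if r = 0 then
       {(fprod [xg (2*p-2), finv (V 1), U 1, finv (xg (2*p-1))],
         fprod [xg (2*p-2), fgen (LB p), finv (xg (2*p-1))])}
     else if r = 1 then
       {(fprod [xg (2*p-1), U j, finv (xg (2*p-1))],
         fprod [xg (2*p-1), phi p j, finv (xg (2*p-1))]) | j. 2 \<le> j \<and> j \<le> n - 1}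
     else if r = 2 then
       {(fprod [xg (2*p-1), U n, finv (V n), finv (xg (2*p))],
         fprod [xg (2*p-1), finv (fgen (LB p)), finv (xg (2*p))])}
     else
       {(fprod [xg (2*p), finv (V j), finv (xg (2*p))],
         fprod [xg (2*p), psi p j, finv (xg (2*p))]) | j. 2 \<le> j \<and> j \<le> n - 1})"

text \<open>Q is a cycle of W: there are a start index i < 16 and, for each y < 16, a finite
list ws y of pairs from W_y (exactly one pair when y is even, any number when y is odd),
and Q is the product w_i w_{i+1 mod 16} ... w_{i+15 mod 16}, where w_y = product of ws y.\<close>
definition is_cycle :: "nat \<Rightarrow> (nat \<Rightarrow> ab list) \<Rightarrow> (nat \<Rightarrow> ab list) \<Rightarrow> gam fword \<times> gam fword \<Rightarrow> bool" where
  "is_cycle n u v Q \<longleftrightarrow>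
    (\<exists>i ws. i < 16 \<and>
       (\<forall>y < 16. set (ws y) \<subseteq> Wset n u v y \<and> (even y \<longrightarrow> length (ws y) = 1)) \<and>
       Q = pprod (map (\<lambda>k. pprod (ws ((i + k) mod 16))) [0..<16]))"

end

theory Submission
  imports Defs
begin

(* Suppose a cycle of W multiplies to (eps, eps).  Rotating a trivial cyclic
   product keeps it trivial, so the cycle may be taken to start at W_0.  Deleting every
   letter outside Gamma_1 is a homomorphism F(Gamma) -> F(Gamma_1); it kills all blocks
   W_4, ..., W_15 and the letters x_k, so what remains are two relations in F(Gamma_1).
   If the odd blocks W_1 and W_3 contribute the index lists J and J', the second components
   give  b_1 phi(J) b_1^-1 psi(J') = eps;  since the words a^j b code index lists
   injectively, this forces J' = rev J.  The first components then read
   v_1^-1 u_1 u_J u_n v_n^-1 v_J^-1 = eps, and as both sides are positive words this is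
   the equality u_1 u_J u_n = v_1 v_J v_n, i.e. J solves the Restricted PCP instance. *)

section \<open>Free reduction\<close>

definition flip :: "'a \<times> bool \<Rightarrow> 'a \<times> bool" where
  "flip x = (fst x, \<not> snd x)"

lemma flip_flip [simp]: "flip (flip x) = x"
  by (simp add: flip_def)

fun reduced :: "'a fword \<Rightarrow> bool" where
  "reduced [] = True"
| "reduced [x] = True"
| "reduced (x # y # ys) = (\<not> (fst x = fst y \<and> snd x \<noteq> snd y) \<and> reduced (y # ys))"

lemma reduced_tl: "reduced (x # ys) \<Longrightarrow> reduced ys"
  by (cases ys) auto

lemma reduced_push: "reduced w \<Longrightarrow> reduced (push x w)"
  by (cases "(x, w)" rule: push.cases) (auto dest: reduced_tl)

lemma reduced_foldr_push: "reduced r \<Longrightarrow> reduced (foldr push w r)"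
  by (induction w) (auto intro: reduced_push)

lemma reduced_fnorm: "reduced (fnorm w)"
  unfolding fnorm_def by (rule reduced_foldr_push) simp

lemma reduced_same_sign: "\<forall>x\<in>set w. snd x = s \<Longrightarrow> reduced w"
  by (induction w rule: reduced.induct) auto

lemma fnorm_Nil [simp]: "fnorm [] = []"
  by (simp add: fnorm_def)

lemma fnorm_Cons: "fnorm (x # w) = push x (fnorm w)"
  by (simp add: fnorm_def)

lemma fnorm_append: "fnorm (xs @ ys) = foldr push xs (fnorm ys)"
  by (simp add: fnorm_def)

lemma fnorm_reduced: "reduced w \<Longrightarrow> fnorm w = w"
proof (induction w)
  case (Cons x ys)
  then have "fnorm ys = ys" using reduced_tl by blast
  then show ?case using Cons.prems by (cases ys) (auto simp: fnorm_def)
qed simp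

lemma fnorm_fnorm [simp]: "fnorm (fnorm w) = fnorm w"
  by (rule fnorm_reduced[OF reduced_fnorm])

lemma fnorm_same_sign: "\<forall>x\<in>set w. snd x = s \<Longrightarrow> fnorm w = w"
  by (rule fnorm_reduced[OF reduced_same_sign])

lemma push_push_flip: "reduced w \<Longrightarrow> push x (push (flip x) w) = w"
proof (cases w)
  case (Cons y ys)
  assume r: "reduced w"
  show ?thesis
  proof (cases "fst (flip x) = fst y \<and> snd (flip x) \<noteq> snd y")
    case True
    then have "y = x" by (cases x, cases y) (auto simp: flip_def)
    then show ?thesis using r Cons True by (cases ys) auto
  next
    case False
    then show ?thesis using Cons by (auto simp: flip_def)
  qed
qed (simp add: flip_def)

lemma foldr_push_push:
  assumes "reduced w" "reduced r"
  shows "foldr push (push x w) r = push x (foldr push w r)"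
proof (cases w)
  case (Cons y ys)
  show ?thesis
  proof (cases "fst x = fst y \<and> snd x \<noteq> snd y")
    case True
    then have "y = flip x" by (cases x, cases y) (auto simp: flip_def)
    then show ?thesis
      using Cons True push_push_flip[OF reduced_foldr_push[OF assms(2)], of x ys] by simp
  qed (use Cons in auto)
qed simp

lemma foldr_push_fnorm: "reduced r \<Longrightarrow> foldr push (fnorm xs) r = foldr push xs r"
  by (induction xs) (simp_all add: fnorm_Cons foldr_push_push reduced_fnorm)

lemma fnorm_append_fnorm_left [simp]: "fnorm (fnorm xs @ ys) = fnorm (xs @ ys)"
  by (simp add: fnorm_append foldr_push_fnorm reduced_fnorm)

lemma fnorm_append_fnorm_right [simp]: "fnorm (xs @ fnorm ys) = fnorm (xs @ ys)"
  by (simp add: fnorm_append)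

lemma fnorm_append_fnorm_middle [simp]: "fnorm (xs @ fnorm ys @ zs) = fnorm (xs @ ys @ zs)"
  by (metis fnorm_append_fnorm_left fnorm_append_fnorm_right)

lemma fnorm_append4:
  "fnorm (fnorm A @ fnorm B @ fnorm C @ fnorm D) = fnorm (A @ B @ C @ D)"
proof -
  have "fnorm (fnorm A @ fnorm B @ fnorm C @ fnorm D) = fnorm (A @ B @ fnorm C @ fnorm D)"
    by simp
  also have "\<dots> = fnorm (A @ B @ C @ D)"
    using fnorm_append_fnorm_middle[of "A @ B" C "fnorm D"] fnorm_append_fnorm_right[of "A @ B @ C" D]
    by simp
  finally show ?thesis .
qed

lemma fnorm_concat_map_fnorm [simp]:
  "fnorm (concat (map (\<lambda>x. fnorm (f x)) xs)) = fnorm (concat (map f xs))"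
proof (induction xs)
  case (Cons x xs)
  have "fnorm (concat (map (\<lambda>x. fnorm (f x)) (x # xs)))
      = fnorm (fnorm (f x) @ fnorm (concat (map (\<lambda>x. fnorm (f x)) xs)))"
    by simp
  then show ?case using Cons by simp
qed simp

lemma fprod_eq: "fprod ws = fnorm (concat ws)"
  by (induction ws) (simp_all add: fprod_def fmul_def)

lemma fst_pprod: "fst (pprod ps) = fprod (map fst ps)"
  by (induction ps) (simp_all add: pprod_def fprod_def pmul_def)

lemma snd_pprod: "snd (pprod ps) = fprod (map snd ps)"
  by (induction ps) (simp_all add: pprod_def fprod_def pmul_def)

lemma finv_Cons: "finv (x # w) = finv w @ [flip x]"
  by (cases x) (simp add: finv_def flip_def)

lemma finv_append: "finv (xs @ ys) = finv ys @ finv xs"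
  by (simp add: finv_def)

lemma finv_finv [simp]: "finv (finv w) = w"
  by (induction w) (auto simp: finv_def)

lemma finv_concat_map: "concat (map (\<lambda>j. finv (f j)) J) = finv (concat (map f (rev J)))"
  by (induction J) (simp_all add: finv_append finv_def)

lemma fnorm_cancel: "fnorm (flip x # x # z) = fnorm z"
  by (simp add: fnorm_Cons push_push_flip[of _ "flip x", simplified] reduced_fnorm)

lemma fnorm_finv_cancel: "fnorm (finv w @ w @ z) = fnorm z"
proof (induction w arbitrary: z)
  case (Cons x w)
  have "fnorm (finv (x # w) @ (x # w) @ z) = fnorm (finv w @ fnorm (flip x # x # w @ z))"
    by (simp add: finv_Cons)
  also have "\<dots> = fnorm z" using Cons by (simp add: fnorm_cancel)
  finally show ?case .
qed (simp add: finv_def)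

lemma trivial_imp_eq: "fnorm (A @ finv B) = [] \<Longrightarrow> fnorm A = fnorm B"
proof -
  assume h: "fnorm (A @ finv B) = []"
  have "fnorm (finv B @ B) = []"
    using fnorm_finv_cancel[of B "[]"] by simp
  then have "fnorm A = fnorm (A @ fnorm (finv B @ B))" by simp
  also have "\<dots> = fnorm (fnorm (A @ finv B) @ B)" by simp
  finally show ?thesis using h by simp
qed

lemma trivial_rotate: "fnorm (A @ B) = [] \<Longrightarrow> fnorm (B @ A) = []"
proof -
  assume h: "fnorm (A @ B) = []"
  have "fnorm (B @ A) = fnorm (finv A @ fnorm (A @ B) @ A)"
    using fnorm_finv_cancel[of A "B @ A"] by simp
  also have "\<dots> = []" using h fnorm_finv_cancel[of A "[]"] by simp
  finally show ?thesis .
qed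

section \<open>Deleting letters\<close>

text \<open>Deleting all letters outside an alphabet \<open>S\<close> and reducing: the canonical
homomorphism from the free group on all letters onto the free group on \<open>S\<close>.\<close>
definition proj :: "('a \<Rightarrow> bool) \<Rightarrow> 'a fword \<Rightarrow> 'a fword" where
  "proj S w = fnorm (filter (\<lambda>x. S (fst x)) w)"

lemma proj_push: "proj S (push x r) = proj S (x # r)"
proof (cases "(x, r)" rule: push.cases)
  case (2 x y ys)
  show ?thesis
  proof (cases "fst x = fst y \<and> snd x \<noteq> snd y")
    case True
    then have "x = flip y" by (cases x, cases y) (auto simp: flip_def)
    then show ?thesis
      using 2 True fnorm_cancel[of y "filter (\<lambda>x. S (fst x)) ys"]
      by (auto simp: proj_def flip_def)
  qed (use 2 in auto)
qed simp_all

lemma proj_Nil [simp]: "proj S [] = []"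
  by (simp add: proj_def)

lemma proj_append: "proj S (xs @ ys) = fnorm (proj S xs @ proj S ys)"
  by (simp add: proj_def)

lemma proj_fnorm [simp]: "proj S (fnorm w) = proj S w"
proof (induction w)
  case (Cons x w)
  have "proj S (fnorm (x # w)) = proj S ([x] @ fnorm w)"
    by (simp add: fnorm_Cons proj_push)
  also have "\<dots> = fnorm (proj S [x] @ proj S w)"
    using Cons by (simp only: proj_append)
  also have "\<dots> = proj S (x # w)"
    using proj_append[of S "[x]" w] by simp
  finally show ?case .
qed simp

lemma proj_concat: "proj S (concat ws) = fnorm (concat (map (proj S) ws))"
  by (induction ws) (simp_all add: proj_append)

lemma proj_fprod [simp]: "proj S (fprod ws) = fnorm (concat (map (proj S) ws))"
  by (simp add: fprod_eq proj_concat)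

lemma proj_id: "reduced w \<Longrightarrow> \<forall>x\<in>set w. S (fst x) \<Longrightarrow> proj S w = w"
  by (simp add: proj_def fnorm_reduced)

lemma proj_vanish: "\<forall>x\<in>set w. \<not> S (fst x) \<Longrightarrow> proj S w = []"
  by (simp add: proj_def filter_empty_conv)

lemma proj_singleton: "proj S [x] = (if S (fst x) then [x] else [])"
  by (simp add: proj_def fnorm_Cons)

lemma proj_fgen [simp]: "proj S (fgen h) = (if S h then fgen h else [])"
  by (simp add: fgen_def proj_singleton)

lemma proj_finv_fgen [simp]: "proj S (finv (fgen h)) = (if S h then finv (fgen h) else [])"
  by (simp add: finv_def fgen_def proj_singleton)

lemma trivial_unrotate:
  assumes "i < m" "fnorm (concat (map (\<lambda>k. g ((i + k) mod m)) [0..<m])) = []"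
  shows "fnorm (concat (map g [0..<m])) = []"
proof -
  let ?L = "map g [0..<m]"
  have "map (\<lambda>k. g ((i + k) mod m)) [0..<m] = rotate i ?L"
    using assms(1) by (intro nth_equalityI) (auto simp: nth_rotate)
  also have "\<dots> = drop (i mod m) ?L @ take (i mod m) ?L"
    by (simp add: rotate_drop_take)
  finally have "fnorm (concat (drop (i mod m) ?L) @ concat (take (i mod m) ?L)) = []"
    using assms(2) by simp
  then have "fnorm (concat (take (i mod m) ?L) @ concat (drop (i mod m) ?L)) = []"
    by (rule trivial_rotate)
  then show ?thesis by (metis append_take_drop_id concat_append)
qed

lemma trivial_project_initial_blocks:
  assumes "fnorm (concat (map g [0..<m])) = []" "r \<le> m"
    and "\<And>y. r \<le> y \<Longrightarrow> y < m \<Longrightarrow> proj S (g y) = []"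
  shows "fnorm (concat (map (\<lambda>y. proj S (g y)) [0..<r])) = []"
proof -
  have "proj S (concat (map g [0..<m])) = []"
    using proj_fnorm[of S "concat (map g [0..<m])"] assms(1) by (simp add: proj_def)
  then have "fnorm (concat (map (\<lambda>y. proj S (g y)) [0..<m])) = []"
    by (simp add: proj_concat comp_def)
  moreover have "[0..<m] = [0..<r] @ [r..<m]"
    using assms(2) by (metis le_iff_add upt_add_eq_append zero_le)
  moreover have "concat (map (\<lambda>y. proj S (g y)) [r..<m]) = []"
    using assms(3) by simp
  ultimately show ?thesis by simp
qed

text \<open>A relation \<open>A\<^sup>-\<^sup>1 B C\<^sup>-\<^sup>1 = 1\<close> between positive words is a literal equality
\<open>B = A C\<close>; this turns the first components of a trivial cycle into a PCP solution.\<close>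
lemma positive_relation_eq:
  assumes "fnorm (finv A @ B @ finv C) = []"
    and "\<forall>x\<in>set B. snd x" and "\<forall>x\<in>set (A @ C). snd x"
  shows "B = A @ C"
proof -
  have "fnorm ((B @ finv C) @ finv A) = []"
    using trivial_rotate[of "finv A" "B @ finv C"] assms(1) by simp
  then have "fnorm (B @ finv (A @ C)) = []"
    by (simp add: finv_append)
  then have "fnorm B = fnorm (A @ C)"
    by (rule trivial_imp_eq)
  then show ?thesis
    using fnorm_same_sign[of B True] fnorm_same_sign[of "A @ C" True] assms(2,3) by simp
qed

definition code :: "'a \<Rightarrow> 'a \<Rightarrow> nat list \<Rightarrow> 'a fword" where
  "code ha hb J = concat (map (\<lambda>j. replicate j (ha, True) @ [(hb, True)]) J)"

lemma code_positive: "\<forall>x\<in>set (code ha hb J). snd x"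
  by (auto simp: code_def)

lemma replicate_prefix_inj:
  "x \<noteq> y \<Longrightarrow> replicate j x @ y # r = replicate k x @ y # r' \<Longrightarrow> j = k \<and> r = r'"
proof (induction j arbitrary: k)
  case 0
  then show ?case by (cases k) auto
next
  case (Suc j)
  then show ?case by (cases k) auto
qed

lemma code_inj:
  assumes "ha \<noteq> hb" "code ha hb J = code ha hb K"
  shows "J = K"
  using assms(2)
proof (induction J arbitrary: K)
  case Nil
  then show ?case by (cases K) (auto simp: code_def)
next
  case (Cons j J)
  then obtain k K' where K: "K = k # K'"
    by (cases K) (auto simp: code_def)
  with Cons.prems have "replicate j (ha, True) @ (hb, True) # code ha hb J
      = replicate k (ha, True) @ (hb, True) # code ha hb K'"
    by (simp add: code_def)
  then have "j = k \<and> code ha hb J = code ha hb K'"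
    using replicate_prefix_inj[of "(ha, True)" "(hb, True)"] assms(1) by blast
  then show ?case using Cons.IH K by auto
qed

lemma code_shift:
  "concat (map (\<lambda>j. y # replicate j x) K) @ [y] = y # concat (map (\<lambda>j. replicate j x @ [y]) K)"
  by (induction K) auto

lemma code_conjugate_rev:
  assumes "ha \<noteq> hb"
    and "fnorm ([(hb, True)] @ code ha hb J @ [(hb, False)]
           @ concat (map (\<lambda>j. replicate j (ha, False) @ [(hb, False)]) J')) = []"
  shows "J' = rev J"
proof -
  define Y where "Y = concat (map (\<lambda>j. (hb, True) # replicate j (ha, True)) (rev J'))"
  have "concat (map (\<lambda>j. replicate j (ha, False) @ [(hb, False)]) J') = finv Y"
    unfolding Y_def finv_concat_map[symmetric] by (simp add: finv_def)
  then have "fnorm (code ha hb J @ [(hb, False)] @ finv Y @ [(hb, True)]) = []"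
    using trivial_rotate[of "[(hb, True)]" "code ha hb J @ [(hb, False)] @ finv Y"] assms(2)
    by simp
  then have "fnorm (code ha hb J @ finv ([(hb, False)] @ Y @ [(hb, True)])) = []"
    by (simp add: finv_append finv_def)
  then have "fnorm (code ha hb J) = fnorm ((hb, False) # (hb, True) # code ha hb (rev J'))"
    by (simp add: trivial_imp_eq Y_def code_shift code_def)
  also have "\<dots> = fnorm (code ha hb (rev J'))"
    using fnorm_cancel[of "(hb, True)"] by (simp add: flip_def)
  finally have "code ha hb J = code ha hb (rev J')"
    using fnorm_same_sign[of _ True] code_positive by metis
  then show ?thesis using code_inj[OF assms(1)] by (metis rev_rev_ident)
qed

section \<open>The construction\<close>

definition copy :: "nat \<Rightarrow> ab \<Rightarrow> gam" where
  "copy p c = (case c of a \<Rightarrow> LA p | b \<Rightarrow> LB p)"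

lemma delta_eq: "delta p w = map (\<lambda>c. (copy p c, True)) w"
proof -
  have "concat (map (\<lambda>c. case c of a \<Rightarrow> fgen (LA p) | b \<Rightarrow> fgen (LB p)) w)
      = map (\<lambda>c. (copy p c, True)) w"
    by (induction w) (auto simp: fgen_def copy_def split: ab.split)
  then show ?thesis
    by (simp add: delta_def fprod_eq fnorm_same_sign[where s = True])
qed

lemma delta_inj:
  assumes "delta p x = delta p y"
  shows "x = y"
proof -
  have "inj (\<lambda>c. (copy p c, True))"
    by (rule injI) (auto simp: copy_def split: ab.splits)
  then show ?thesis using assms by (simp add: delta_eq)
qed

lemma phi_eq: "phi i j = replicate j (LA i, True) @ [(LB i, True)]"
  by (simp add: phi_def fprod_eq fgen_def fnorm_same_sign[where s = True])

lemma psi_eq: "psi i j = replicate j (LA i, False) @ [(LB i, False)]"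
  by (simp add: psi_def fprod_eq fgen_def finv_def fnorm_same_sign[where s = False])

definition gamma1 :: "gam \<Rightarrow> bool" where
  "gamma1 h \<longleftrightarrow> h = LA 1 \<or> h = LB 1"

lemma proj_gamma1_delta [simp]: "proj gamma1 (delta p w) = (if p = 1 then delta p w else [])"
  by (auto simp: delta_eq gamma1_def copy_def intro!: proj_id proj_vanish
      reduced_same_sign[where s = True] split: ab.splits)

lemma proj_gamma1_finv_delta [simp]:
  "proj gamma1 (finv (delta p w)) = (if p = 1 then finv (delta p w) else [])"
  by (auto simp: delta_eq finv_def gamma1_def copy_def intro!: proj_id proj_vanish
      reduced_same_sign[where s = False] split: ab.splits)

lemma proj_gamma1_phi [simp]: "proj gamma1 (phi p j) = (if p = 1 then phi p j else [])"
  by (auto simp: phi_eq gamma1_def intro!: proj_id proj_vanish reduced_same_sign[where s = True])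

lemma proj_gamma1_psi [simp]: "proj gamma1 (psi p j) = (if p = 1 then psi p j else [])"
  by (auto simp: psi_eq gamma1_def intro!: proj_id proj_vanish reduced_same_sign[where s = False])

text \<open>The blocks \<open>W_4, \<dots>, W_15\<close> only use letters of \<open>\<Gamma>_2, \<Gamma>_3, \<Gamma>_4\<close> and \<open>\<Gamma>_B\<close>.\<close>
lemma proj_gamma1_far_block:
  assumes "4 \<le> y" "y < 16" "w \<in> Wset n u v y"
  shows "proj gamma1 (fst w) = [] \<and> proj gamma1 (snd w) = []"
proof -
  have "y div 4 + 1 \<noteq> 1" using assms(1) by auto
  then show ?thesis
    using assms(3) by (auto simp: Wset_def Let_def xg_def gamma1_def split: if_splits)
qed

lemma trivial_cycle_projection:
  assumes "i < 16" "\<forall>y<16. set (ws y) \<subseteq> Wset n u v y" "\<pi> \<in> {fst, snd}"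
    and "\<pi> (pprod (map (\<lambda>k. pprod (ws ((i + k) mod 16))) [0..<16])) = []"
  shows "fnorm (proj gamma1 (concat (map \<pi> (ws 0))) @ proj gamma1 (concat (map \<pi> (ws 1)))
           @ proj gamma1 (concat (map \<pi> (ws 2))) @ proj gamma1 (concat (map \<pi> (ws 3)))) = []"
proof -
  define g where "g y = concat (map \<pi> (ws y))" for y
  have \<pi>_pprod: "\<pi> (pprod ps) = fprod (map \<pi> ps)" for ps
    using assms(3) fst_pprod snd_pprod by auto
  have "fnorm (concat (map (\<lambda>k. g ((i + k) mod 16)) [0..<16])) = []"
    using assms(4) by (simp add: \<pi>_pprod fprod_eq g_def comp_def)
  then have "fnorm (concat (map g [0..<16])) = []"
    by (rule trivial_unrotate[OF assms(1)])
  moreover have "proj gamma1 (g y) = []" if "4 \<le> y" "y < 16" for y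
  proof -
    have "\<forall>w\<in>set (ws y). proj gamma1 (\<pi> w) = []"
      using assms(2,3) proj_gamma1_far_block[OF that] that by blast
    have "proj gamma1 (g y) = fnorm (concat (map (\<lambda>w. proj gamma1 (\<pi> w)) (ws y)))"
      by (simp add: g_def proj_concat comp_def)
    also have "concat (map (\<lambda>w. proj gamma1 (\<pi> w)) (ws y)) = []"
      using \<open>\<forall>w\<in>set (ws y). proj gamma1 (\<pi> w) = []\<close> by simp
    finally show ?thesis by simp
  qed
  ultimately have "fnorm (concat (map (\<lambda>y. proj gamma1 (g y)) [0..<4])) = []"
    using trivial_project_initial_blocks[of g 16 4 gamma1] by simp
  then show ?thesis by (simp add: g_def upt_rec numeral_2_eq_2 numeral_3_eq_3)
qed

lemma list_singleton: "set xs \<subseteq> {w} \<Longrightarrow> length xs = 1 \<Longrightarrow> xs = [w]"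
  by (cases xs) auto

lemma list_in_image:
  assumes "set xs \<subseteq> {f j | j. C j}"
  obtains J where "xs = map f J" "\<forall>j\<in>set J. C j"
proof -
  have "\<exists>J. xs = map f J \<and> (\<forall>j\<in>set J. C j)"
    using assms
  proof (induction xs)
    case (Cons x xs)
    then obtain J where "xs = map f J" "\<forall>j\<in>set J. C j" by auto
    moreover obtain j where "x = f j" "C j" using Cons.prems by auto
    ultimately show ?case by (intro exI[of _ "j # J"]) auto
  qed simp
  then show ?thesis using that by blast
qed

lemma cycle_initial_blocks:
  assumes ws: "\<forall>y<16. set (ws y) \<subseteq> Wset n u v y \<and> (even y \<longrightarrow> length (ws y) = 1)"
  obtains J J' where "\<forall>j\<in>set J. 2 \<le> j \<and> j \<le> n - 1"
    and "ws 0 = [(fprod [xg 0, finv (delta 1 (v 1)), delta 1 (u 1), finv (xg 1)],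
                  fprod [xg 0, fgen (LB 1), finv (xg 1)])]"
    and "ws 1 = map (\<lambda>j. (fprod [xg 1, delta 1 (u j), finv (xg 1)],
                          fprod [xg 1, phi 1 j, finv (xg 1)])) J"
    and "ws 2 = [(fprod [xg 1, delta 1 (u n), finv (delta 1 (v n)), finv (xg 2)],
                  fprod [xg 1, finv (fgen (LB 1)), finv (xg 2)])]"
    and "ws 3 = map (\<lambda>j. (fprod [xg 2, finv (delta 1 (v j)), finv (xg 2)],
                          fprod [xg 2, psi 1 j, finv (xg 2)])) J'"
proof -
  have "set (ws 1) \<subseteq> {(fprod [xg 1, delta 1 (u j), finv (xg 1)],
                           fprod [xg 1, phi 1 j, finv (xg 1)]) | j. 2 \<le> j \<and> j \<le> n - 1}"
    using ws[rule_format, of 1] by (simp add: Wset_def Let_def)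
  then obtain J where ws1: "ws 1 = map (\<lambda>j. (fprod [xg 1, delta 1 (u j), finv (xg 1)],
                                             fprod [xg 1, phi 1 j, finv (xg 1)])) J"
    and J: "\<forall>j\<in>set J. 2 \<le> j \<and> j \<le> n - 1"
    by (rule list_in_image)
  have "set (ws 3) \<subseteq> {(fprod [xg 2, finv (delta 1 (v j)), finv (xg 2)],
                           fprod [xg 2, psi 1 j, finv (xg 2)]) | j. 2 \<le> j \<and> j \<le> n - 1}"
    using ws[rule_format, of 3] by (simp add: Wset_def Let_def)
  then obtain J' where ws3: "ws 3 = map (\<lambda>j. (fprod [xg 2, finv (delta 1 (v j)), finv (xg 2)],
                                               fprod [xg 2, psi 1 j, finv (xg 2)])) J'"
    by (rule list_in_image)
  have "ws 0 = [(fprod [xg 0, finv (delta 1 (v 1)), delta 1 (u 1), finv (xg 1)],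
                 fprod [xg 0, fgen (LB 1), finv (xg 1)])]"
    using ws[rule_format, of 0] by (intro list_singleton) (auto simp: Wset_def Let_def)
  moreover have "ws 2 = [(fprod [xg 1, delta 1 (u n), finv (delta 1 (v n)), finv (xg 2)],
                          fprod [xg 1, finv (fgen (LB 1)), finv (xg 2)])]"
    using ws[rule_format, of 2] by (intro list_singleton) (auto simp: Wset_def Let_def)
  ultimately show ?thesis using that J ws1 ws3 by blast
qed

lemma trivial_cycle_relations:
  assumes "is_cycle n u v ([], [])"
  obtains J J' where "\<forall>j\<in>set J. 2 \<le> j \<and> j \<le> n - 1"
    and "fnorm (finv (delta 1 (v 1)) @ delta 1 (u 1) @ concat (map (\<lambda>j. delta 1 (u j)) J)
           @ delta 1 (u n) @ finv (delta 1 (v n)) @ concat (map (\<lambda>j. finv (delta 1 (v j))) J')) = []"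
    and "fnorm ([(LB 1, True)] @ concat (map (phi 1) J) @ [(LB 1, False)]
           @ concat (map (psi 1) J')) = []"
proof -
  obtain i ws where i: "i < 16"
    and ws: "\<forall>y<16. set (ws y) \<subseteq> Wset n u v y \<and> (even y \<longrightarrow> length (ws y) = 1)"
    and cycle: "([], []) = pprod (map (\<lambda>k. pprod (ws ((i + k) mod 16))) [0..<16])"
    using assms unfolding is_cycle_def by blast
  obtain J J' where J: "\<forall>j\<in>set J. 2 \<le> j \<and> j \<le> n - 1"
    and ws0: "ws 0 = [(fprod [xg 0, finv (delta 1 (v 1)), delta 1 (u 1), finv (xg 1)],
                       fprod [xg 0, fgen (LB 1), finv (xg 1)])]"
    and ws1: "ws 1 = map (\<lambda>j. (fprod [xg 1, delta 1 (u j), finv (xg 1)],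
                               fprod [xg 1, phi 1 j, finv (xg 1)])) J"
    and ws2: "ws 2 = [(fprod [xg 1, delta 1 (u n), finv (delta 1 (v n)), finv (xg 2)],
                       fprod [xg 1, finv (fgen (LB 1)), finv (xg 2)])]"
    and ws3: "ws 3 = map (\<lambda>j. (fprod [xg 2, finv (delta 1 (v j)), finv (xg 2)],
                               fprod [xg 2, psi 1 j, finv (xg 2)])) J'"
    by (rule cycle_initial_blocks[OF ws])
  have ws_W: "\<forall>y<16. set (ws y) \<subseteq> Wset n u v y" using ws by blast
  have "fnorm (proj gamma1 (concat (map fst (ws 0))) @ proj gamma1 (concat (map fst (ws 1)))
           @ proj gamma1 (concat (map fst (ws 2))) @ proj gamma1 (concat (map fst (ws 3)))) = []"
    using trivial_cycle_projection[OF i ws_W, of fst] cycle by (metis fst_conv insertI1)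
  moreover have "proj gamma1 (concat (map fst (ws 0)))
      = fnorm (finv (delta 1 (v 1)) @ delta 1 (u 1))"
    unfolding ws0 by (simp add: xg_def gamma1_def)
  moreover have "proj gamma1 (concat (map fst (ws 1))) = fnorm (concat (map (\<lambda>j. delta 1 (u j)) J))"
    unfolding ws1 by (simp add: proj_concat comp_def xg_def gamma1_def)
  moreover have "proj gamma1 (concat (map fst (ws 2)))
      = fnorm (delta 1 (u n) @ finv (delta 1 (v n)))"
    unfolding ws2 by (simp add: xg_def gamma1_def)
  moreover have "proj gamma1 (concat (map fst (ws 3)))
      = fnorm (concat (map (\<lambda>j. finv (delta 1 (v j))) J'))"
    unfolding ws3 by (simp add: proj_concat comp_def xg_def gamma1_def)
  ultimately have rel1: "fnorm (finv (delta 1 (v 1)) @ delta 1 (u 1) @ concat (map (\<lambda>j. delta 1 (u j)) J)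
           @ delta 1 (u n) @ finv (delta 1 (v n)) @ concat (map (\<lambda>j. finv (delta 1 (v j))) J')) = []"
    by (simp only: fnorm_append4 append_assoc)
  have "fnorm (proj gamma1 (concat (map snd (ws 0))) @ proj gamma1 (concat (map snd (ws 1)))
           @ proj gamma1 (concat (map snd (ws 2))) @ proj gamma1 (concat (map snd (ws 3)))) = []"
    using trivial_cycle_projection[OF i ws_W, of snd] cycle by (metis snd_conv insertI2 singletonI)
  moreover have "proj gamma1 (concat (map snd (ws 0))) = fnorm [(LB 1, True)]"
    unfolding ws0 by (simp add: xg_def gamma1_def) (simp add: fgen_def fnorm_Cons)
  moreover have "proj gamma1 (concat (map snd (ws 1))) = fnorm (concat (map (phi 1) J))"
    unfolding ws1 by (simp add: proj_concat comp_def xg_def gamma1_def)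
  moreover have "proj gamma1 (concat (map snd (ws 2))) = fnorm [(LB 1, False)]"
    unfolding ws2 by (simp add: xg_def gamma1_def) (simp add: fgen_def finv_def fnorm_Cons)
  moreover have "proj gamma1 (concat (map snd (ws 3))) = fnorm (concat (map (psi 1) J'))"
    unfolding ws3 by (simp add: proj_concat comp_def xg_def gamma1_def)
  ultimately have rel2: "fnorm ([(LB 1, True)] @ concat (map (phi 1) J) @ [(LB 1, False)]
           @ concat (map (psi 1) J')) = []"
    by (simp only: fnorm_append4 append_assoc)
  show ?thesis using that J rel1 rel2 by blast
qed

text \<open>The two relations of a trivial cycle: the second one forces \<open>J' = rev J\<close>, and then
the first one says that \<open>J\<close> solves the Restricted PCP instance.\<close>
lemma relations_imp_solution:
  assumes J: "\<forall>j\<in>set J. 2 \<le> j \<and> j \<le> n - 1"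
    and rel1: "fnorm (finv (delta 1 (v 1)) @ delta 1 (u 1) @ concat (map (\<lambda>j. delta 1 (u j)) J)
           @ delta 1 (u n) @ finv (delta 1 (v n)) @ concat (map (\<lambda>j. finv (delta 1 (v j))) J')) = []"
    and rel2: "fnorm ([(LB 1, True)] @ concat (map (phi 1) J) @ [(LB 1, False)]
           @ concat (map (psi 1) J')) = []"
  shows "rpcp_solution n u v J"
proof -
  have "J' = rev J"
    using rel2 by (intro code_conjugate_rev[of "LA 1" "LB 1"])
      (simp_all add: code_def phi_eq[abs_def] psi_eq[abs_def])
  then have "concat (map (\<lambda>j. finv (delta 1 (v j))) J') = finv (delta 1 (concat (map v J)))"
    by (simp add: finv_concat_map delta_eq map_concat comp_def)
  then have "fnorm (finv (delta 1 (v 1)) @ delta 1 (u 1 @ concat (map u J) @ u n)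
               @ finv (delta 1 (concat (map v J) @ v n))) = []"
    using rel1 by (simp add: delta_eq map_concat finv_append comp_def)
  then have "delta 1 (u 1 @ concat (map u J) @ u n) = delta 1 (v 1) @ delta 1 (concat (map v J) @ v n)"
    by (rule positive_relation_eq) (auto simp: delta_eq)
  then have "delta 1 (u 1 @ concat (map u J) @ u n) = delta 1 (v 1 @ concat (map v J) @ v n)"
    by (simp add: delta_eq)
  then show ?thesis
    using J delta_inj unfolding rpcp_solution_def by blast
qed

lemma trivial_cycle_imp_solution:
  assumes "is_cycle n u v ([], [])"
  shows "\<exists>ls. rpcp_solution n u v ls"
  by (rule trivial_cycle_relations[OF assms]) (blast intro: relations_imp_solution)

theorem mainTheorem2:
  fixes n :: nat and u v :: "nat \<Rightarrow> ab list" and Q :: "gam fword \<times> gam fword"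
  assumes "n \<ge> 3"
    and "\<not> (\<exists>ls. rpcp_solution n u v ls)"
    and "is_cycle n u v Q"
  shows "Q \<noteq> ([], [])"
  using assms(2,3) trivial_cycle_imp_solution by blast

end
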